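(* Let $\omega=\omega_0\omega_1\cdots$ be an infinite sequence over $\{b,c,d\}$ and let $n\ge1$ be such that $\omega_{n-1}=d$. Then in $G_\omega$ (indeed in $\mathrm{Aut}(\mathbf{T})$) we have $(a d_k)^{2^{n-k+1}}=1$ for every $0\le k<n$.
   Context: Let $\mathbf{T}=\{0,1\}^*$ be the rooted binary tree of finite binary strings, and $a$ the automorphism flipping the first bit of a string ($a$ fixes the empty string). For an infinite sequence $\omega$ over $\{b,c,d\}$, each $x\in\{b,c,d\}$ and each $n\ge0$, the automorphism $x_n$ is defined by $x_n(1^j)=1^j$ for all $j\ge0$, and $x_n(1^j0s)=1^j0s$ if $\omega_{n+j}=x$, $x_n(1^j0s)=1^j0a(s)$ if $\omega_{n+j}\ne x$, for all $j\ge0$ and strings $s$. In particular $d_k$ denotes the element $x_k$ for $x=d$. The generalized Grigorchuk group is $G_\omega=\langle a,b_0,c_0,d_0\rangle$. *)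

theory Defs
  imports Main
begin

text \<open>Vertices of the rooted binary tree are finite binary strings (bool lists,
  True = 1, False = 0, head = first bit). Tree automorphisms are functions on them;
  the group product is function composition.\<close>

datatype letter = B | C | D

definition a_aut :: "bool list \<Rightarrow> bool list" where
  "a_aut s = (case s of [] \<Rightarrow> [] | x # t \<Rightarrow> (\<not> x) # t)"

fun gen_aut :: "(nat \<Rightarrow> letter) \<Rightarrow> letter \<Rightarrow> nat \<Rightarrow> bool list \<Rightarrow> bool list" where
  "gen_aut w x n [] = []"
| "gen_aut w x n (True # s) = True # gen_aut w x (Suc n) s"
| "gen_aut w x n (False # s) = False # (if w n = x then s else a_aut s)"

end

theory Submission
  imports Defs
begin

text \<open>The square of \<open>a x\<^sub>k\<close> fixes the two subtrees below the root and acts on them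
  as \<open>x\<^sub>k\<^sub>+\<^sub>1 \<phi>\<close> and \<open>\<phi> x\<^sub>k\<^sub>+\<^sub>1\<close>, where the twist \<open>\<phi>\<close> is trivial if \<open>\<omega>\<^sub>k = x\<close> and equals \<open>a\<close>
  otherwise. In the first case \<open>(a x\<^sub>k)\<^sup>4 = 1\<close> because \<open>x\<^sub>k\<^sub>+\<^sub>1\<close> is an involution; in the
  second both sections are conjugate to \<open>a x\<^sub>k\<^sub>+\<^sub>1\<close>, so the order of \<open>a x\<^sub>k\<close> is at most
  twice that of \<open>a x\<^sub>k\<^sub>+\<^sub>1\<close>. Since \<open>\<omega>\<^sub>n\<^sub>-\<^sub>1 = x\<close>, the bound \<open>4\<close> is doubled at most
  \<open>n - 1 - k\<close> times.\<close>

lemma a_aut_a_aut [simp]: "a_aut (a_aut s) = s"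
  by (cases s) (auto simp: a_aut_def)

lemma gen_aut_gen_aut [simp]: "gen_aut w x n (gen_aut w x n s) = s"
  by (induction w x n s rule: gen_aut.induct) auto

lemma funpow_mult_eq_id: "f ^^ m = id \<Longrightarrow> f ^^ (m * j) = id"
  by (induction j) (simp_all add: funpow_add)

lemma funpow_comp_involution:
  assumes "\<And>s. h (h s) = s"
  shows "((g \<circ> h) ^^ m) s = h (((h \<circ> g) ^^ m) (h s))"
  using assms by (induction m arbitrary: s) auto

lemma funpow_comp_involution_eq_id:
  assumes "\<And>s. h (h s) = s" and "(h \<circ> g) ^^ m = id"
  shows "(g \<circ> h) ^^ m = id"
  using assms by (auto simp: funpow_comp_involution)

definition twist :: "(nat \<Rightarrow> letter) \<Rightarrow> letter \<Rightarrow> nat \<Rightarrow> bool list \<Rightarrow> bool list" where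
  "twist w x k = (if w k = x then id else a_aut)"

lemma twist_twist: "twist w x k (twist w x k s) = s"
  by (auto simp: twist_def)

lemma a_gen_aut_square:
  "((a_aut \<circ> gen_aut w x k) ^^ 2) [] = []"
  "((a_aut \<circ> gen_aut w x k) ^^ 2) (False # s) = False # (gen_aut w x (Suc k) \<circ> twist w x k) s"
  "((a_aut \<circ> gen_aut w x k) ^^ 2) (True # s) = True # (twist w x k \<circ> gen_aut w x (Suc k)) s"
  by (auto simp: numeral_2_eq_2 a_aut_def twist_def)

lemma a_gen_aut_funpow_double_eq_id:
  assumes "(twist w x k \<circ> gen_aut w x (Suc k)) ^^ m = id"
  shows "(a_aut \<circ> gen_aut w x k) ^^ (2 * m) = id"
proof
  let ?g = "gen_aut w x (Suc k)" and ?t = "twist w x k"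
  have other_section: "(?g \<circ> ?t) ^^ m = id"
    using funpow_comp_involution_eq_id[OF twist_twist assms] .
  fix s
  have "((a_aut \<circ> gen_aut w x k) ^^ (2 * m)) s = (((a_aut \<circ> gen_aut w x k) ^^ 2) ^^ m) s"
    by (simp add: funpow_mult)
  also have "\<dots> = (case s of [] \<Rightarrow> [] | False # r \<Rightarrow> False # ((?g \<circ> ?t) ^^ m) r
      | True # r \<Rightarrow> True # ((?t \<circ> ?g) ^^ m) r)"
    by (induction m arbitrary: s) (auto simp: a_gen_aut_square split: list.split bool.split)
  also have "\<dots> = id s"
    using assms other_section by (simp split: list.split bool.split)
  finally show "((a_aut \<circ> gen_aut w x k) ^^ (2 * m)) s = id s" .
qed

lemma a_gen_aut_funpow_four:
  assumes "w k = x"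
  shows "(a_aut \<circ> gen_aut w x k) ^^ 4 = id"
proof -
  have "(twist w x k \<circ> gen_aut w x (Suc k)) ^^ 2 = id"
    using assms by (auto simp: twist_def numeral_2_eq_2)
  then show ?thesis
    using a_gen_aut_funpow_double_eq_id by fastforce
qed

lemma a_gen_aut_funpow_eq_id:
  assumes "w (k + d) = x"
  shows "(a_aut \<circ> gen_aut w x k) ^^ (2 ^ (d + 2)) = id"
  using assms
proof (induction d arbitrary: k)
  case 0
  then have "w k = x" and "(2::nat) ^ (0 + 2) = 4" by simp_all
  then show ?case using a_gen_aut_funpow_four by metis
next
  case (Suc d)
  show ?case
  proof (cases "w k = x")
    case True
    have "(2::nat) ^ (Suc d + 2) = 4 * 2 ^ Suc d" by simp
    then show ?thesis using a_gen_aut_funpow_four[of w k x, OF True] funpow_mult_eq_id by metis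
  next
    case False
    have "(a_aut \<circ> gen_aut w x (Suc k)) ^^ (2 ^ (d + 2)) = id"
      using Suc.IH[of "Suc k"] Suc.prems by (simp add: comp_def id_def)
    then have "(twist w x k \<circ> gen_aut w x (Suc k)) ^^ (2 ^ (d + 2)) = id"
      using False by (simp add: twist_def)
    then have "(a_aut \<circ> gen_aut w x k) ^^ (2 * 2 ^ (d + 2)) = id"
      by (rule a_gen_aut_funpow_double_eq_id)
    moreover have "(2::nat) ^ (Suc d + 2) = 2 * 2 ^ (d + 2)" by simp
    ultimately show ?thesis by metis
  qed
qed

theorem lemma6p2:
  fixes w :: "nat \<Rightarrow> letter" and n k :: nat
  assumes "n \<ge> 1" and "w (n - 1) = D" and "k < n"
  shows "(a_aut \<circ> gen_aut w D k) ^^ (2 ^ (n - k + 1)) = id"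
proof -
  have "n - k + 1 = (n - 1 - k) + 2" and "k + (n - 1 - k) = n - 1"
    using assms by auto
  then show ?thesis
    using a_gen_aut_funpow_eq_id[of w k "n - 1 - k" D] assms(2) by simp
qed

end
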